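(* Let $\epsilon>0$, $\beta\in(0,1)$, $\delta\in(0,1)$, and let $c:\mathbb{N}^2\times(0,1)\to\mathbb{R}_+$ (indexed by $\epsilon$ and phase indices $k_1,k_2$) be any family of threshold functions. If all rewards lie in $[0,1]$ (i.e. the potential-reward tables are in $([0,1]^K)^T$), then the algorithm AdaP-TT described in the context satisfies $\epsilon$-global DP.
   Context: Setting: $K$ arms; at each round $n$ the algorithm pulls $I_n\in[K]$ and observes reward $X_n$. $N_{n,a}=\sum_{t<n}\mathbf{1}\{I_t=a\}$. Laplace$(b)$ denotes the distribution with density $\frac{1}{2b}e^{-|x|/b}$. AdaP-TT (inputs $\beta,\delta,\epsilon$, thresholds $c_{\epsilon,k_1,k_2}$): In rounds $1,\dots,K$ pull each arm once. For each arm $a$ set phase index $k_a=1$, $T_1(a)=K+1$, $\tilde N_{1,a}=1$, $\tilde\mu_{1,a}=$ (initial reward of $a$) $+Y_{1,a}$ with $Y_{1,a}\sim$ Laplace$(1/\epsilon)$; $L_{n,a}$ = number of rounds $t<n$ with $B_t=a$; $N^a_{n,b}$ = number of rounds $t<n$ with $B_t=a$ and $I_t=b$. For each round $n>K$: (1) For every arm $a$ with $N_{n,a}\ge 2N_{T_{k_a}(a),a}$: set $k_a\leftarrow k_a+1$, $T_{k_a}(a)=n$, $\tilde N_{k_a,a}=N_{T_{k_a}(a),a}-N_{T_{k_a-1}(a),a}$, $\hat\mu_{k_a,a}=\tilde N_{k_a,a}^{-1}\sum_{s=T_{k_a-1}(a)}^{T_{k_a}(a)-1}X_s\mathbf{1}\{I_s=a\}$,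 and $\tilde\mu_{k_a,a}=\hat\mu_{k_a,a}+Y_{k_a,a}$ with fresh independent $Y_{k_a,a}\sim$ Laplace$(1/(\epsilon\tilde N_{k_a,a}))$. (2) $\hat a_n=\arg\max_b\tilde\mu_{k_b,b}$. (3) If for all $b\ne\hat a_n$, $\frac{(\tilde\mu_{k_{\hat a_n},\hat a_n}-\tilde\mu_{k_b,b})^2}{1/\tilde N_{k_{\hat a_n},\hat a_n}+1/\tilde N_{k_b,b}}\ge 2c_{\epsilon,k_{\hat a_n},k_b}(\tilde N_{k_{\hat a_n},\hat a_n},\tilde N_{k_b,b},\delta)$, stop and output recommendation $\hat a_n$ and stopping time $n$. (4) Leader $B_n=\arg\max_a\{\tilde\mu_{k_a,a}+\sqrt{k_a/\tilde N_{k_a,a}}+k_a/(\epsilon\tilde N_{k_a,a})\}$; challenger $C_n=\arg\min_{a\ne B_n}\frac{\tilde\mu_{k_{B_n},B_n}-\tilde\mu_{k_a,a}}{\sqrt{1/N_{n,B_n}+1/N_{n,a}}}$. (5) $I_n=B_n$ if $N^{B_n}_{n,B_n}\le\beta L_{n+1,B_n}$ (where $L_{n+1,B_n}=L_{n,B_n}+1$), else $I_n=C_n$; pull $I_n$, observe $X_n$, update counts. $\epsilon$-global DP: each user $t$ is a vector $\mathbf{x}_t\in\mathbb{R}^K$ of potential rewards and the reward observed at round $t$ is $x_{t,I_t}$. For a table $\underline{\mathbf{d}}^T=(\mathbf{x}_1,\dots,\mathbf{x}_T)$, let $\pi(\underline{a}^T,\hat a,T\mid\underline{\mathbf{d}}^T)$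 be the probability that the algorithm pulls exactly $a_1,\dots,a_T$, then stops and recommends $\hat a$. The algorithm is $\epsilon$-global DP if $\pi(\underline{a}^T,\hat a,T\mid\underline{\mathbf{d}}^T)\le e^\epsilon\pi(\underline{a}^T,\hat a,T\mid\underline{\mathbf{d}}'^T)$ for all $T$, all tables $\underline{\mathbf{d}}^T,\underline{\mathbf{d}}'^T$ differing in exactly one row, all $\underline{a}^T\in[K]^T$, $\hat a\in[K]$. *)

theory Defs
  imports "HOL-Probability.Probability"
begin

(* Arms are 0-indexed: arm a ranges over {0..<K} (paper's arm a+1).
   Rounds are 1-indexed.  A history h lists rounds 1..length h; entry t-1 is
   (I_t, X_t, B_t), where B_t = None for the initial rounds 1..K (no leader). *)
type_synonym hist = "(nat \<times> real \<times> nat option) list"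

definition arm_of :: "hist \<Rightarrow> nat \<Rightarrow> nat" where
  "arm_of h t = fst (h ! (t - 1))"
definition rew_of :: "hist \<Rightarrow> nat \<Rightarrow> real" where
  "rew_of h t = fst (snd (h ! (t - 1)))"
definition leader_of :: "hist \<Rightarrow> nat \<Rightarrow> nat option" where
  "leader_of h t = snd (snd (h ! (t - 1)))"

definition Ncnt :: "hist \<Rightarrow> nat \<Rightarrow> nat \<Rightarrow> nat" where
  "Ncnt h a n = card {t. 1 \<le> t \<and> t < n \<and> t \<le> length h \<and> arm_of h t = a}"
definition Lcnt :: "hist \<Rightarrow> nat \<Rightarrow> nat \<Rightarrow> nat" where
  "Lcnt h a n = card {t. 1 \<le> t \<and> t < n \<and> t \<le> length h \<and> leader_of h t = Some a}"
definition Lself :: "hist \<Rightarrow> nat \<Rightarrow> nat \<Rightarrow> nat" where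
  "Lself h a n = card {t. 1 \<le> t \<and> t < n \<and> t \<le> length h \<and> leader_of h t = Some a \<and> arm_of h t = a}"
definition rsum :: "hist \<Rightarrow> nat \<Rightarrow> nat \<Rightarrow> nat \<Rightarrow> real" where
  "rsum h a s1 s2 = (\<Sum>t\<in>{s1..<s2}. if arm_of h t = a then rew_of h t else 0)"

(* phase K h a j = (k_a, T_{k_a - 1}(a), T_{k_a}(a)) at round K+1+j, after step (1).
   (T_0 is a dummy value 0, never used.) *)
fun phase :: "nat \<Rightarrow> hist \<Rightarrow> nat \<Rightarrow> nat \<Rightarrow> nat \<times> nat \<times> nat" where
  "phase K h a 0 = (1, 0, K + 1)"
| "phase K h a (Suc j) =
     (let (k, sp, s) = phase K h a j; m = K + 2 + j in
      if Ncnt h a m \<ge> 2 * Ncnt h a s then (k + 1, s, m) else (k, sp, s))"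

definition Ntil :: "nat \<Rightarrow> hist \<Rightarrow> nat \<Rightarrow> nat \<Rightarrow> nat" where
  "Ntil K h a n = (let (k, sp, s) = phase K h a (n - (K + 1)) in
                   if k = 1 then 1 else Ncnt h a s - Ncnt h a sp)"

(* Laplace noise: omega (k,a) is a standard Laplace(1) variable; the noise added
   in phase k of arm a is Y_{k,a} = omega (k,a) / (eps * Ntilde_{k,a}) ~ Laplace(1/(eps*Ntilde)). *)
definition mutil :: "nat \<Rightarrow> real \<Rightarrow> (nat \<times> nat \<Rightarrow> real) \<Rightarrow> hist \<Rightarrow> nat \<Rightarrow> nat \<Rightarrow> real" where
  "mutil K eps \<omega> h a n = (let (k, sp, s) = phase K h a (n - (K + 1)); N = real (Ntil K h a n) in
      (if k = 1 then rew_of h (a + 1) else rsum h a sp s / N) + \<omega> (k, a) / (eps * N))"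

definition argmax_idx :: "nat \<Rightarrow> (nat \<Rightarrow> real) \<Rightarrow> nat" where
  "argmax_idx K f = (LEAST a. a < K \<and> (\<forall>b<K. f b \<le> f a))"

definition argmin_ne :: "nat \<Rightarrow> nat \<Rightarrow> (nat \<Rightarrow> real) \<Rightarrow> nat" where
  "argmin_ne K B f = (LEAST a. a < K \<and> a \<noteq> B \<and> (\<forall>b<K. b \<noteq> B \<longrightarrow> f a \<le> f b))"

datatype decision = Stop nat | Pull nat "nat option"

(* The decision of AdaP-TT at round n = length h + 1 given the history h of rounds 1..n-1.
   c eps k1 k2 N1 N2 delta stands for c_{eps,k1,k2}(N1,N2,delta). *)
definition decide :: "nat \<Rightarrow> real \<Rightarrow> real \<Rightarrow> real \<Rightarrow>
    (real \<Rightarrow> nat \<Rightarrow> nat \<Rightarrow> nat \<Rightarrow> nat \<Rightarrow> real \<Rightarrow> real) \<Rightarrow>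
    (nat \<times> nat \<Rightarrow> real) \<Rightarrow> hist \<Rightarrow> decision" where
  "decide K \<beta> \<delta> eps c \<omega> h =
    (let n = length h + 1 in
     if n \<le> K then Pull (n - 1) None
     else
       (let kk = (\<lambda>a. fst (phase K h a (n - (K + 1))));
            NN = (\<lambda>a. Ntil K h a n);
            mu = (\<lambda>a. mutil K eps \<omega> h a n);
            ah = argmax_idx K mu
        in if (\<forall>b<K. b \<noteq> ah \<longrightarrow>
                 (mu ah - mu b)\<^sup>2 / (1 / real (NN ah) + 1 / real (NN b))
                   \<ge> 2 * c eps (kk ah) (kk b) (NN ah) (NN b) \<delta>)
           then Stop ah
           else
             (let B = argmax_idx K (\<lambda>a. mu a + sqrt (real (kk a) / real (NN a))
                                        + real (kk a) / (eps * real (NN a)));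
                  C = argmin_ne K B (\<lambda>a. (mu B - mu a) /
                         sqrt (1 / real (Ncnt h B n) + 1 / real (Ncnt h a n)))
              in if real (Lself h B n) \<le> \<beta> * real (Lcnt h B n + 1)
                 then Pull B (Some B) else Pull C (Some B))))"

(* History of the run after n rounds on table d (d t a = potential reward of arm a for user t);
   if the algorithm has stopped, the history stays frozen (and is shorter than n). *)
fun run_hist :: "nat \<Rightarrow> real \<Rightarrow> real \<Rightarrow> real \<Rightarrow>
    (real \<Rightarrow> nat \<Rightarrow> nat \<Rightarrow> nat \<Rightarrow> nat \<Rightarrow> real \<Rightarrow> real) \<Rightarrow>
    (nat \<Rightarrow> nat \<Rightarrow> real) \<Rightarrow> (nat \<times> nat \<Rightarrow> real) \<Rightarrow> nat \<Rightarrow> hist" where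
  "run_hist K \<beta> \<delta> eps c d \<omega> 0 = []"
| "run_hist K \<beta> \<delta> eps c d \<omega> (Suc n) =
     (let h = run_hist K \<beta> \<delta> eps c d \<omega> n in
      if length h = n then
        (case decide K \<beta> \<delta> eps c \<omega> h of
           Stop _ \<Rightarrow> h
         | Pull i b \<Rightarrow> h @ [(i, d (n + 1) i, b)])
      else h)"

definition laplace :: "real \<Rightarrow> real measure" where
  "laplace b = density lborel (\<lambda>x. ennreal (exp (- \<bar>x\<bar> / b) / (2 * b)))"

definition noise_space :: "(nat \<times> nat \<Rightarrow> real) measure" where
  "noise_space = PiM UNIV (\<lambda>_. laplace 1)"

(* pi(a_1..a_T, ahat, T | d): the algorithm pulls exactly as in rounds 1..T and
   then, at round T+1, stops and recommends ahat. *)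
definition adap_pi :: "nat \<Rightarrow> real \<Rightarrow> real \<Rightarrow> real \<Rightarrow>
    (real \<Rightarrow> nat \<Rightarrow> nat \<Rightarrow> nat \<Rightarrow> nat \<Rightarrow> real \<Rightarrow> real) \<Rightarrow>
    (nat \<Rightarrow> nat \<Rightarrow> real) \<Rightarrow> nat \<Rightarrow> nat list \<Rightarrow> nat \<Rightarrow> real" where
  "adap_pi K \<beta> \<delta> eps c d T as ahat =
     measure noise_space
       {\<omega> \<in> space noise_space.
          let h = run_hist K \<beta> \<delta> eps c d \<omega> T in
          length h = T \<and> map fst h = as \<and> decide K \<beta> \<delta> eps c \<omega> h = Stop ahat}"

end

theory Submission
  imports Defs
begin

(* Fix the round t0 in which the two tables differ and the arm sequence as.  The reward observed
   in round t0 enters exactly one noisy mean: the one that arm a0 = as ! (t0 - 1) publishes at the end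
   of the phase containing t0 (for t0 <= K, the initial estimate of arm t0 - 1).  A noisy mean is
   (S + omega (k, a) / eps) / N, where S is the reward sum of the phase and omega (k, a) the standard
   Laplace variable of that phase.  Hence running on d' with omega (k0, a0) shifted by
   eps * (d t0 a0 - d' t0 a0) reproduces every noisy mean, and therefore every decision, of the run
   on d: the event "pull as, then stop with ahat" for d is the preimage of the same event for d'
   under a shift of one coordinate by at most eps.  Shifting a Laplace(1) variable by s changes its
   density by at most the factor exp |s|. *)

section \<open>Phases and counts\<close>

lemma phase_bounds:
  assumes "phase K h a j = (k, sp, s)"
  shows "1 \<le> k \<and> K + 1 \<le> s \<and> s \<le> K + 1 + j \<and>
    (k = 1 \<longrightarrow> sp = 0 \<and> s = K + 1) \<and> (k \<noteq> 1 \<longrightarrow> K + 1 \<le> sp \<and> sp < s)"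
  using assms
proof (induction j arbitrary: k sp s)
  case (Suc j)
  then show ?case
    by (cases "phase K h a j") (auto simp: Let_def split: if_splits)
qed simp

lemma phase_index_ge_1: "1 \<le> fst (phase K h a j)"
  using phase_bounds[of K h a j] by (cases "phase K h a j") auto

lemma phase_Suc_cases:
  "phase K h a (Suc j) = phase K h a j \<or>
   phase K h a (Suc j) = (fst (phase K h a j) + 1, snd (snd (phase K h a j)), K + 2 + j)"
  by (cases "phase K h a j") (simp add: Let_def)

lemma phase_index_mono: "i \<le> j \<Longrightarrow> fst (phase K h a i) \<le> fst (phase K h a j)"
proof (induction j rule: dec_induct)
  case (step j)
  then show ?case
    using phase_Suc_cases[of K h a j] by auto
qed simp

lemma phase_index_eq_iff:
  assumes "j0 \<le> j"
  shows "fst (phase K h a j) = fst (phase K h a j0) \<longleftrightarrow> snd (snd (phase K h a j)) \<le> K + 1 + j0"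
  using assms
proof (induction j rule: dec_induct)
  case base
  then show ?case
    using phase_bounds[of K h a j0] by (cases "phase K h a j0") auto
next
  case (step j)
  then show ?case
    using phase_Suc_cases[of K h a j] phase_index_mono[of j0 j K h a] by auto
qed

lemma phase_index_eq_Suc_iff:
  "fst (phase K h a j) = fst (phase K h a j0) + 1 \<longleftrightarrow>
   fst (phase K h a j) \<noteq> 1 \<and> K + 1 + j0 \<in> {fst (snd (phase K h a j))..<snd (snd (phase K h a j))}"
proof (induction j)
  case 0
  then show ?case
    using phase_bounds[of K h a j0] by (cases "phase K h a j0") auto
next
  case (Suc j)
  consider "phase K h a (Suc j) = phase K h a j"
    | "phase K h a (Suc j) = (fst (phase K h a j) + 1, snd (snd (phase K h a j)), K + 2 + j)"
    using phase_Suc_cases by blast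
  then show ?case
  proof cases
    case 1
    with Suc show ?thesis by simp
  next
    case 2
    show ?thesis
    proof (cases "j0 \<le> j")
      case True
      then show ?thesis
        using 2 phase_index_eq_iff[OF True, of K h a] phase_bounds[of K h a j0]
        by (cases "phase K h a j0") auto
    next
      case False
      then have "fst (phase K h a (Suc j)) \<le> fst (phase K h a j0)"
        by (intro phase_index_mono) simp
      with 2 False show ?thesis by auto
    qed
  qed
qed

lemma Ncnt_eq_card_take:
  "Ncnt h a m = card {t \<in> {1..length (take (m - 1) (map fst h))}. take (m - 1) (map fst h) ! (t - 1) = a}"
  unfolding Ncnt_def arm_of_def by (rule arg_cong[where f = card]) auto

lemma Ncnt_take_cong:
  "take (m - 1) (map fst h) = take (m - 1) (map fst h') \<Longrightarrow> Ncnt h a m = Ncnt h' a m"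
  by (simp only: Ncnt_eq_card_take)

lemma phase_take_cong:
  "take (K + j) (map fst h) = take (K + j) (map fst h') \<Longrightarrow> phase K h a j = phase K h' a j"
proof (induction j)
  case (Suc j)
  obtain k sp s where phase_j: "phase K h a j = (k, sp, s)"
    by (cases "phase K h a j")
  have "take (K + j) (map fst h) = take (K + j) (map fst h')"
    using arg_cong[OF Suc.prems, of "take (K + j)"] by simp
  then have "phase K h' a j = (k, sp, s)"
    using Suc.IH phase_j by simp
  moreover have "Ncnt h a s = Ncnt h' a s"
  proof (rule Ncnt_take_cong)
    have "s - 1 \<le> K + Suc j"
      using phase_bounds[OF phase_j] by auto
    then show "take (s - 1) (map fst h) = take (s - 1) (map fst h')"
      using arg_cong[OF Suc.prems, of "take (s - 1)"] by (simp add: min_absorb1)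
  qed
  moreover have "Ncnt h a (K + 2 + j) = Ncnt h' a (K + 2 + j)"
    using Suc.prems by (intro Ncnt_take_cong) simp
  ultimately show ?case
    using phase_j by (simp add: Let_def)
qed simp

lemma arm_statistics_cong:
  assumes "map fst h = map fst h'"
  shows "Ncnt h a m = Ncnt h' a m" "phase K h a j = phase K h' a j" "Ntil K h a n = Ntil K h' a n"
proof -
  show Ncnt_eq: "Ncnt h b m = Ncnt h' b m" for b m
    using assms by (intro Ncnt_take_cong) simp
  show phase_eq: "phase K h b j = phase K h' b j" for b j
    using assms by (intro phase_take_cong) simp
  show "Ntil K h a n = Ntil K h' a n"
    unfolding Ntil_def Ncnt_eq phase_eq ..
qed

definition strip_rewards :: "hist \<Rightarrow> (nat \<times> nat option) list" where
  "strip_rewards h = map (\<lambda>(i, _, b). (i, b)) h"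

lemma map_fst_strip_rewards [simp]: "map fst (strip_rewards h) = map fst h"
  by (simp add: strip_rewards_def case_prod_beta)

lemma length_strip_rewards [simp]: "length (strip_rewards h) = length h"
  by (simp add: strip_rewards_def)

lemma strip_rewards_eqD:
  assumes "strip_rewards h' = strip_rewards h"
  shows "map fst h' = map fst h" "length h' = length h"
  using arg_cong[OF assms, of "map fst"] arg_cong[OF assms, of length] by simp_all

lemma strip_rewards_imp_leader_statistics_eq:
  assumes "strip_rewards h = strip_rewards h'"
  shows "Lcnt h = Lcnt h'" "Lself h = Lself h'"
proof -
  note length_eq = strip_rewards_eqD(2)[OF assms]
  have "arm_of h t = arm_of h' t \<and> leader_of h t = leader_of h' t" if "t \<in> {1..length h}" for t
    using arg_cong[OF assms, of "\<lambda>xs. xs ! (t - 1)"] that length_eq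
    by (auto simp: strip_rewards_def arm_of_def leader_of_def case_prod_beta)
  then show "Lcnt h = Lcnt h'" "Lself h = Lself h'"
    unfolding Lcnt_def Lself_def using length_eq
    by (auto intro!: ext arg_cong[where f = card])
qed

section \<open>Coupling of the noise\<close>

definition shift_noise :: "'i \<Rightarrow> real \<Rightarrow> ('i \<Rightarrow> real) \<Rightarrow> 'i \<Rightarrow> real" where
  "shift_noise i s x = x(i := x i + s)"

lemma shift_noise_shift_noise [simp]: "shift_noise i s (shift_noise i t x) = shift_noise i (t + s) x"
  by (simp add: shift_noise_def add.assoc)

lemma shift_noise_0 [simp]: "shift_noise i 0 x = x"
  by (simp add: shift_noise_def)

definition arm_hist :: "nat list \<Rightarrow> hist" where
  "arm_hist as = map (\<lambda>i. (i, 0, None)) as"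

(* The coordinate (k, a) of the noise whose noisy mean contains the reward of round t: rounds
   t <= K are the initial pulls of arm t - 1 (phase 1); a later reward of arm a enters the mean that
   a publishes when its phase index next increases. *)
definition reward_slot :: "nat \<Rightarrow> nat list \<Rightarrow> nat \<Rightarrow> nat \<times> nat" where
  "reward_slot K as t =
     (if t \<le> K then (1, t - 1)
      else (fst (phase K (arm_hist as) (as ! (t - 1)) (t - (K + 1))) + 1, as ! (t - 1)))"

lemma reward_slot_eq_iff:
  assumes phase_j: "phase K (arm_hist as) a j = (k, sp, s)" and "a < K" "1 \<le> t"
  shows "(k, a) = reward_slot K as t \<longleftrightarrow>
    (if k = 1 then t = a + 1 else t \<in> {sp..<s} \<and> as ! (t - 1) = a)"
proof (cases "t \<le> K")
  case True
  then show ?thesis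
    using phase_bounds[OF phase_j] assms(3) by (auto simp: reward_slot_def)
next
  case False
  define j0 where "j0 = t - (K + 1)"
  have t_eq: "K + 1 + j0 = t"
    using False by (simp add: j0_def)
  show ?thesis
  proof (cases "k = 1")
    case True
    then show ?thesis
      using False assms(2) phase_index_ge_1[of K "arm_hist as" "as ! (t - 1)" j0]
      by (auto simp: reward_slot_def j0_def)
  next
    case False
    then show ?thesis
      using \<open>\<not> t \<le> K\<close> phase_index_eq_Suc_iff[of K "arm_hist as" a j j0] phase_j t_eq
      by (auto simp: reward_slot_def j0_def)
  qed
qed

definition reward_shifted_at :: "hist \<Rightarrow> hist \<Rightarrow> nat \<Rightarrow> real \<Rightarrow> bool" where
  "reward_shifted_at h h' t0 \<Delta> \<longleftrightarrow> map fst h' = map fst h \<and>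
     (\<forall>t\<in>{1..length h}. rew_of h t = rew_of h' t + (if t = t0 then \<Delta> else 0))"

lemma arm_of_eq_if_map_fst_eq:
  assumes "map fst h' = map fst h" "t \<in> {1..length h}"
  shows "arm_of h' t = arm_of h t"
proof -
  have "t - 1 < length h" "length h' = length h"
    using assms map_eq_imp_length_eq by auto
  then show ?thesis
    using nth_map[of "t - 1" h fst] nth_map[of "t - 1" h' fst] assms(1) by (simp add: arm_of_def)
qed

lemma arm_of_eq_nth:
  assumes "map fst h = take (length h) as" "t \<in> {1..length h}"
  shows "arm_of h t = as ! (t - 1)"
proof -
  have "t - 1 < length h"
    using assms(2) by auto
  then show ?thesis
    using arg_cong[OF assms(1), of "\<lambda>xs. xs ! (t - 1)"] by (simp add: arm_of_def)
qed

lemma rsum_reward_shifted: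
  assumes shifted: "reward_shifted_at h h' t0 \<Delta>" and window: "{s1..<s2} \<subseteq> {1..length h}"
  shows "rsum h a s1 s2 = rsum h' a s1 s2 + (if t0 \<in> {s1..<s2} \<and> arm_of h t0 = a then \<Delta> else 0)"
proof -
  have "rsum h a s1 s2 = (\<Sum>t\<in>{s1..<s2}. (if arm_of h' t = a then rew_of h' t else 0) +
      (if t = t0 then if arm_of h t0 = a then \<Delta> else 0 else 0))"
    unfolding rsum_def using shifted window arm_of_eq_if_map_fst_eq[of h' h]
    by (intro sum.cong) (auto simp: reward_shifted_at_def subset_iff)
  also have "\<dots> = rsum h' a s1 s2 + (if t0 \<in> {s1..<s2} \<and> arm_of h t0 = a then \<Delta> else 0)"
    by (simp add: sum.distrib rsum_def)
  finally show ?thesis .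
qed

definition phase_reward_sum :: "nat \<Rightarrow> hist \<Rightarrow> nat \<Rightarrow> nat \<Rightarrow> real" where
  "phase_reward_sum K h a n = (let (k, sp, s) = phase K h a (n - (K + 1)) in
     if k = 1 then rew_of h (a + 1) else rsum h a sp s)"

lemma mutil_eq_phase_reward_sum:
  "mutil K eps \<omega> h a n =
     (phase_reward_sum K h a n + \<omega> (fst (phase K h a (n - (K + 1))), a) / eps) / real (Ntil K h a n)"
  by (cases "phase K h a (n - (K + 1))")
    (simp add: mutil_def phase_reward_sum_def Ntil_def Let_def add_divide_distrib)

lemma phase_reward_sum_reward_shifted:
  assumes shifted: "reward_shifted_at h h' t0 \<Delta>" and arms: "map fst h = take (length h) as"
    and "K \<le> length h" "a < K" "1 \<le> t0"
  shows "phase_reward_sum K h a (length h + 1) = phase_reward_sum K h' a (length h + 1) +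
    (if (fst (phase K h a (length h - K)), a) = reward_slot K as t0 then \<Delta> else 0)"
proof -
  define j where "j = length h - K"
  have n_eq: "length h + 1 - (K + 1) = j" and Kj_eq: "K + j = length h"
    using assms(3) by (simp_all add: j_def)
  obtain k sp s where phase_H: "phase K (arm_hist as) a j = (k, sp, s)"
    by (cases "phase K (arm_hist as) a j")
  have "phase K h a j = phase K (arm_hist as) a j"
    using arms by (intro phase_take_cong) (simp add: Kj_eq arm_hist_def comp_def)
  then have phase_h: "phase K h a j = (k, sp, s)" and phase_h': "phase K h' a j = (k, sp, s)"
    using phase_H arm_statistics_cong(2)[of h' h] shifted by (auto simp: reward_shifted_at_def)
  have k_eq: "fst (phase K h a (length h - K)) = k"
    using phase_h by (simp add: j_def)
  have slot_iff: "(k, a) = reward_slot K as t0 \<longleftrightarrow>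
      (if k = 1 then t0 = a + 1 else t0 \<in> {sp..<s} \<and> as ! (t0 - 1) = a)"
    by (rule reward_slot_eq_iff[OF phase_H assms(4,5)])
  show ?thesis
  proof (cases "k = 1")
    case True
    then show ?thesis
      using shifted assms(3,4) slot_iff
      unfolding phase_reward_sum_def n_eq phase_h phase_h' k_eq by (auto simp: reward_shifted_at_def)
  next
    case False
    have window: "{sp..<s} \<subseteq> {1..length h}"
      using phase_bounds[OF phase_h] False Kj_eq by auto
    have "arm_of h t0 = as ! (t0 - 1)" if "t0 \<in> {sp..<s}"
      using that window by (intro arm_of_eq_nth[OF arms]) auto
    then show ?thesis
      using False slot_iff rsum_reward_shifted[OF shifted window, of a]
      unfolding phase_reward_sum_def n_eq phase_h phase_h' k_eq by auto
  qed
qed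

lemma mutil_reward_shifted:
  assumes "eps \<noteq> 0" and shifted: "reward_shifted_at h h' t0 \<Delta>"
    and "map fst h = take (length h) as" "K \<le> length h" "a < K" "1 \<le> t0"
  shows "mutil K eps (shift_noise (reward_slot K as t0) (eps * \<Delta>) \<omega>) h' a (length h + 1) =
    mutil K eps \<omega> h a (length h + 1)"
proof -
  have arms_eq: "map fst h = map fst h'"
    using shifted by (simp add: reward_shifted_at_def)
  have length_eq: "length h' = length h"
    using map_eq_imp_length_eq[OF arms_eq] by simp
  show ?thesis
    using phase_reward_sum_reward_shifted[OF shifted assms(3-6)] \<open>eps \<noteq> 0\<close>
    unfolding mutil_eq_phase_reward_sum length_eq arm_statistics_cong[OF arms_eq]
    by (simp add: shift_noise_def add_divide_distrib)
qed

definition decide_with :: "nat \<Rightarrow> real \<Rightarrow> real \<Rightarrow> real \<Rightarrow>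
    (real \<Rightarrow> nat \<Rightarrow> nat \<Rightarrow> nat \<Rightarrow> nat \<Rightarrow> real \<Rightarrow> real) \<Rightarrow> hist \<Rightarrow> (nat \<Rightarrow> real) \<Rightarrow> decision" where
  "decide_with K \<beta> \<delta> eps c h mu =
    (let n = length h + 1 in
     if n \<le> K then Pull (n - 1) None
     else
       (let kk = (\<lambda>a. fst (phase K h a (n - (K + 1))));
            NN = (\<lambda>a. Ntil K h a n);
            ah = argmax_idx K mu
        in if (\<forall>b<K. b \<noteq> ah \<longrightarrow>
                 (mu ah - mu b)\<^sup>2 / (1 / real (NN ah) + 1 / real (NN b))
                   \<ge> 2 * c eps (kk ah) (kk b) (NN ah) (NN b) \<delta>)
           then Stop ah
           else
             (let B = argmax_idx K (\<lambda>a. mu a + sqrt (real (kk a) / real (NN a))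
                                        + real (kk a) / (eps * real (NN a)));
                  C = argmin_ne K B (\<lambda>a. (mu B - mu a) /
                         sqrt (1 / real (Ncnt h B n) + 1 / real (Ncnt h a n)))
              in if real (Lself h B n) \<le> \<beta> * real (Lcnt h B n + 1)
                 then Pull B (Some B) else Pull C (Some B))))"

lemma decide_eq_decide_with:
  "decide K \<beta> \<delta> eps c \<omega> h = decide_with K \<beta> \<delta> eps c h (\<lambda>a. mutil K eps \<omega> h a (length h + 1))"
  unfolding decide_def decide_with_def Let_def ..

lemma decide_with_strip_rewards_cong:
  assumes "strip_rewards h' = strip_rewards h"
  shows "decide_with K \<beta> \<delta> eps c h' mu = decide_with K \<beta> \<delta> eps c h mu"
proof -
  note arms_eq = strip_rewards_eqD(1)[OF assms]
  show ?thesis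
    unfolding decide_with_def strip_rewards_eqD(2)[OF assms] arm_statistics_cong[OF arms_eq]
      strip_rewards_imp_leader_statistics_eq[OF assms] ..
qed

lemma argmax_idx_cong:
  "K = K' \<Longrightarrow> (\<And>a. a < K' \<Longrightarrow> f a = g a) \<Longrightarrow> argmax_idx K f = argmax_idx K' g"
  unfolding argmax_idx_def by (rule arg_cong[where f = Least]) auto

lemma argmin_ne_cong:
  "K = K' \<Longrightarrow> B = B' \<Longrightarrow> (\<And>a. a < K' \<Longrightarrow> f a = g a) \<Longrightarrow> argmin_ne K B f = argmin_ne K' B' g"
  unfolding argmin_ne_def by (rule arg_cong[where f = Least]) auto

lemma argmax_idx_less: "0 < K \<Longrightarrow> argmax_idx K f < K"
proof -
  assume "0 < K"
  then have "Max (f ` {..<K}) \<in> f ` {..<K}"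
    by (intro Max_in) auto
  then obtain a where "a < K" "f a = Max (f ` {..<K})"
    by auto
  then have "a < K \<and> (\<forall>b<K. f b \<le> f a)"
    by simp
  then show ?thesis
    unfolding argmax_idx_def by (rule LeastI2) simp
qed

lemma decide_with_cong:
  assumes "K \<le> length h \<Longrightarrow> \<forall>a<K. mu' a = mu a"
  shows "decide_with K \<beta> \<delta> eps c h mu' = decide_with K \<beta> \<delta> eps c h mu"
proof (cases "K \<le> length h \<and> 0 < K")
  case True
  with assms have "a < K \<Longrightarrow> mu' a = mu a" for a
    by blast
  with True show ?thesis
    unfolding decide_with_def Let_def
    by (simp add: argmax_idx_less cong: argmax_idx_cong argmin_ne_cong) blast
qed (auto simp: decide_with_def argmax_idx_def)

lemma decide_reward_shifted:
  assumes "eps \<noteq> 0" "strip_rewards h' = strip_rewards h" "reward_shifted_at h h' t0 \<Delta>"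
    "map fst h = take (length h) as" "1 \<le> t0"
  shows "decide K \<beta> \<delta> eps c (shift_noise (reward_slot K as t0) (eps * \<Delta>) \<omega>) h' =
    decide K \<beta> \<delta> eps c \<omega> h"
  unfolding decide_eq_decide_with strip_rewards_eqD(2)[OF assms(2)]
    decide_with_strip_rewards_cong[OF assms(2)]
  by (rule decide_with_cong) (use mutil_reward_shifted[OF assms(1,3,4)] assms(5) in blast)

lemma length_run_hist_le: "length (run_hist K \<beta> \<delta> eps c d \<omega> n) \<le> n"
  by (induction n) (auto simp: Let_def split: decision.splits)

lemma run_hist_SucE:
  assumes "length (run_hist K \<beta> \<delta> eps c d \<omega> (Suc n)) = Suc n"
  obtains i b where "length (run_hist K \<beta> \<delta> eps c d \<omega> n) = n"
    and "decide K \<beta> \<delta> eps c \<omega> (run_hist K \<beta> \<delta> eps c d \<omega> n) = Pull i b"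
    and "run_hist K \<beta> \<delta> eps c d \<omega> (Suc n) = run_hist K \<beta> \<delta> eps c d \<omega> n @ [(i, d (n + 1) i, b)]"
  using assms length_run_hist_le[of K \<beta> \<delta> eps c d \<omega> n]
  by (auto simp: Let_def split: if_splits decision.splits)

lemma rew_of_run_hist:
  "t \<in> {1..length (run_hist K \<beta> \<delta> eps c d \<omega> n)} \<Longrightarrow>
   rew_of (run_hist K \<beta> \<delta> eps c d \<omega> n) t = d t (arm_of (run_hist K \<beta> \<delta> eps c d \<omega> n) t)"
proof (induction n)
  case (Suc n)
  then show ?case
    by (auto simp: Let_def rew_of_def arm_of_def nth_append not_less le_Suc_eq
        split: if_splits decision.splits)
qed simp

lemma reward_shifted_at_rows:
  assumes strip: "strip_rewards h' = strip_rewards h" and arms: "map fst h = take (length h) as"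
    and rew: "\<forall>t\<in>{1..length h}. rew_of h t = d t (arm_of h t)"
    and rew': "\<forall>t\<in>{1..length h'}. rew_of h' t = d' t (arm_of h' t)"
    and rows: "\<forall>t\<in>{1..length as} - {t0}. d' t (as ! (t - 1)) = d t (as ! (t - 1))"
  shows "reward_shifted_at h h' t0 (d t0 (as ! (t0 - 1)) - d' t0 (as ! (t0 - 1)))"
proof -
  note arms_eq = strip_rewards_eqD(1)[OF strip]
  have "length h' = length h" "length h \<le> length as"
    using strip_rewards_eqD(2)[OF strip] arg_cong[OF arms, of length] by auto
  moreover have "arm_of h' t = as ! (t - 1)" "arm_of h t = as ! (t - 1)" if "t \<in> {1..length h}" for t
    using arm_of_eq_if_map_fst_eq[OF arms_eq that] arm_of_eq_nth[OF arms that] by simp_all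
  ultimately show ?thesis
    using arms_eq rew rew' rows by (auto simp: reward_shifted_at_def)
qed

definition coupled_noise :: "nat \<Rightarrow> nat list \<Rightarrow> nat \<Rightarrow> real \<Rightarrow> (nat \<Rightarrow> nat \<Rightarrow> real) \<Rightarrow>
    (nat \<Rightarrow> nat \<Rightarrow> real) \<Rightarrow> (nat \<times> nat \<Rightarrow> real) \<Rightarrow> nat \<times> nat \<Rightarrow> real" where
  "coupled_noise K as t0 eps d d' =
     shift_noise (reward_slot K as t0) (eps * (d t0 (as ! (t0 - 1)) - d' t0 (as ! (t0 - 1))))"

definition stops_with :: "nat \<Rightarrow> real \<Rightarrow> real \<Rightarrow> real \<Rightarrow>
    (real \<Rightarrow> nat \<Rightarrow> nat \<Rightarrow> nat \<Rightarrow> nat \<Rightarrow> real \<Rightarrow> real) \<Rightarrow>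
    (nat \<Rightarrow> nat \<Rightarrow> real) \<Rightarrow> nat list \<Rightarrow> nat \<Rightarrow> (nat \<times> nat \<Rightarrow> real) \<Rightarrow> bool" where
  "stops_with K \<beta> \<delta> eps c d as ahat \<omega> \<longleftrightarrow>
     (let h = run_hist K \<beta> \<delta> eps c d \<omega> (length as) in
      map fst h = as \<and> decide K \<beta> \<delta> eps c \<omega> h = Stop ahat)"

context
  fixes K :: nat and \<beta> \<delta> eps :: real and c :: "real \<Rightarrow> nat \<Rightarrow> nat \<Rightarrow> nat \<Rightarrow> nat \<Rightarrow> real \<Rightarrow> real"
    and d d' :: "nat \<Rightarrow> nat \<Rightarrow> real" and as :: "nat list" and t0 :: nat
  assumes eps: "eps \<noteq> 0" and t0: "1 \<le> t0"
    and rows: "\<forall>t\<in>{1..length as} - {t0}. d' t (as ! (t - 1)) = d t (as ! (t - 1))"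
begin

lemma decide_run_hist_coupled:
  assumes arms: "map fst (run_hist K \<beta> \<delta> eps c d \<omega> n) = take (length (run_hist K \<beta> \<delta> eps c d \<omega> n)) as"
    and strip: "strip_rewards (run_hist K \<beta> \<delta> eps c d' (coupled_noise K as t0 eps d d' \<omega>) n) =
      strip_rewards (run_hist K \<beta> \<delta> eps c d \<omega> n)"
  shows "decide K \<beta> \<delta> eps c (coupled_noise K as t0 eps d d' \<omega>)
      (run_hist K \<beta> \<delta> eps c d' (coupled_noise K as t0 eps d d' \<omega>) n) =
    decide K \<beta> \<delta> eps c \<omega> (run_hist K \<beta> \<delta> eps c d \<omega> n)"
proof -
  note strip' = strip[unfolded coupled_noise_def]
  have "reward_shifted_at (run_hist K \<beta> \<delta> eps c d \<omega> n)
      (run_hist K \<beta> \<delta> eps c d' (coupled_noise K as t0 eps d d' \<omega>) n) t0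
      (d t0 (as ! (t0 - 1)) - d' t0 (as ! (t0 - 1)))"
    unfolding coupled_noise_def
    by (rule reward_shifted_at_rows[where d = d and d' = d', OF strip' arms _ _ rows])
      (use rew_of_run_hist in blast)+
  then show ?thesis
    unfolding coupled_noise_def by (rule decide_reward_shifted[OF eps strip' _ arms t0])
qed

lemma run_hist_coupled:
  assumes "n \<le> length as" "map fst (run_hist K \<beta> \<delta> eps c d \<omega> n) = take n as"
  shows "strip_rewards (run_hist K \<beta> \<delta> eps c d' (coupled_noise K as t0 eps d d' \<omega>) n) =
    strip_rewards (run_hist K \<beta> \<delta> eps c d \<omega> n)"
  using assms
proof (induction n)
  case (Suc n)
  let ?\<omega>' = "coupled_noise K as t0 eps d d' \<omega>"
  have "length (run_hist K \<beta> \<delta> eps c d \<omega> (Suc n)) = Suc n"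
    using arg_cong[OF Suc.prems(2), of length] Suc.prems(1) by simp
  then obtain i b where length_n: "length (run_hist K \<beta> \<delta> eps c d \<omega> n) = n"
    and pull: "decide K \<beta> \<delta> eps c \<omega> (run_hist K \<beta> \<delta> eps c d \<omega> n) = Pull i b"
    and run_Suc: "run_hist K \<beta> \<delta> eps c d \<omega> (Suc n) = run_hist K \<beta> \<delta> eps c d \<omega> n @ [(i, d (n + 1) i, b)]"
    by (rule run_hist_SucE)
  have arms: "map fst (run_hist K \<beta> \<delta> eps c d \<omega> n) = take n as"
    using arg_cong[OF Suc.prems(2), of "take n"] run_Suc length_n by simp
  have strip: "strip_rewards (run_hist K \<beta> \<delta> eps c d' ?\<omega>' n) = strip_rewards (run_hist K \<beta> \<delta> eps c d \<omega> n)"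
    using Suc.IH Suc.prems(1) arms by simp
  have "length (run_hist K \<beta> \<delta> eps c d' ?\<omega>' n) = n"
    using strip_rewards_eqD(2)[OF strip] length_n by simp
  moreover have "decide K \<beta> \<delta> eps c ?\<omega>' (run_hist K \<beta> \<delta> eps c d' ?\<omega>' n) = Pull i b"
    using decide_run_hist_coupled[OF _ strip] arms length_n pull by simp
  ultimately have "run_hist K \<beta> \<delta> eps c d' ?\<omega>' (Suc n) = run_hist K \<beta> \<delta> eps c d' ?\<omega>' n @ [(i, d' (n + 1) i, b)]"
    by (simp add: Let_def)
  then show ?case
    using strip run_Suc by (simp add: strip_rewards_def)
qed simp

lemma stops_with_coupled:
  assumes "stops_with K \<beta> \<delta> eps c d as ahat \<omega>"
  shows "stops_with K \<beta> \<delta> eps c d' as ahat (coupled_noise K as t0 eps d d' \<omega>)"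
proof -
  let ?h = "run_hist K \<beta> \<delta> eps c d \<omega> (length as)"
  let ?h' = "run_hist K \<beta> \<delta> eps c d' (coupled_noise K as t0 eps d d' \<omega>) (length as)"
  have arms: "map fst ?h = as" and stop: "decide K \<beta> \<delta> eps c \<omega> ?h = Stop ahat"
    using assms by (simp_all add: stops_with_def Let_def)
  have strip: "strip_rewards ?h' = strip_rewards ?h"
    using run_hist_coupled arms by simp
  moreover have "length ?h = length as"
    using arg_cong[OF arms, of length] by simp
  ultimately show ?thesis
    using strip_rewards_eqD(1)[OF strip] decide_run_hist_coupled[OF _ strip] arms stop
    by (simp add: stops_with_def Let_def)
qed

end

lemma stops_with_coupled_iff:
  assumes "eps \<noteq> 0" "1 \<le> t0" "\<forall>t\<in>{1..length as} - {t0}. d' t (as ! (t - 1)) = d t (as ! (t - 1))"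
  shows "stops_with K \<beta> \<delta> eps c d' as ahat (coupled_noise K as t0 eps d d' \<omega>) \<longleftrightarrow>
    stops_with K \<beta> \<delta> eps c d as ahat \<omega>"
proof
  have "coupled_noise K as t0 eps d' d (coupled_noise K as t0 eps d d' \<omega>) = \<omega>"
    by (simp add: coupled_noise_def algebra_simps)
  moreover assume "stops_with K \<beta> \<delta> eps c d' as ahat (coupled_noise K as t0 eps d d' \<omega>)"
  ultimately show "stops_with K \<beta> \<delta> eps c d as ahat \<omega>"
    using stops_with_coupled[of eps t0 as d d'] assms by fastforce
qed (rule stops_with_coupled[where d = d and d' = d', OF assms])

section \<open>Laplace noise\<close>

lemma nn_integral_density_shift_le:
  fixes g :: "real \<Rightarrow> ennreal"
  assumes [measurable]: "g \<in> borel_measurable borel" "F \<in> borel_measurable borel"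
    and g_shift: "\<And>y. g (y - s) \<le> C * g y"
  shows "(\<integral>\<^sup>+x. F (x + s) \<partial>density lborel g) \<le> C * (\<integral>\<^sup>+x. F x \<partial>density lborel g)"
proof -
  have "(\<integral>\<^sup>+x. F (x + s) \<partial>density lborel g) = (\<integral>\<^sup>+x. g x * F (x + s) \<partial>lborel)"
    by (simp add: nn_integral_density)
  also have "\<dots> = (\<integral>\<^sup>+y. g (y - s) * F y \<partial>lborel)"
    using nn_integral_real_affine[of "\<lambda>y. g (y - s) * F y" 1 s] by (simp add: add.commute)
  also have "\<dots> \<le> (\<integral>\<^sup>+y. C * (g y * F y) \<partial>lborel)"
    by (intro nn_integral_mono) (metis g_shift mult.assoc mult_right_mono zero_le)
  also have "\<dots> = C * (\<integral>\<^sup>+x. F x \<partial>density lborel g)"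
    by (simp add: nn_integral_cmult nn_integral_density)
  finally show ?thesis .
qed

lemma sets_laplace [measurable_cong, simp]: "sets (laplace b) = sets borel"
  by (simp add: laplace_def)

lemma prob_space_laplace:
  assumes "0 < b"
  shows "prob_space (laplace b)"
proof
  let ?e = "exponential_density (1 / b)"
  have [measurable]: "?e \<in> borel_measurable borel"
    by (simp add: exponential_density_def)
  have e_nonneg: "0 \<le> ?e x" for x
    using assms by (simp add: exponential_density_def)
  have e_int: "(\<integral>\<^sup>+x. ?e x \<partial>lborel) = 1"
  proof -
    interpret prob_space "density lborel ?e"
      using prob_space_exponential_density[of "1 / b"] assms by simp
    show ?thesis
      using emeasure_space_1 by (simp add: emeasure_density)
  qed
  have e_reflected_int: "(\<integral>\<^sup>+x. ?e (- x) \<partial>lborel) = 1"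
    using nn_integral_real_affine[of ?e "-1" 0] e_int by simp
  \<comment> \<open>away from 0 the Laplace density is the average of an exponential density and its reflection\<close>
  have "AE x in lborel. ennreal (exp (- \<bar>x\<bar> / b) / (2 * b)) = ennreal (1 / 2) * (?e x + ?e (- x))"
    using AE_lborel_singleton[of 0]
  proof eventually_elim
    case (elim x)
    then have "exp (- \<bar>x\<bar> / b) / (2 * b) = 1 / 2 * (?e x + ?e (- x))"
      by (cases "x < 0") (auto simp: exponential_density_def)
    also have "ennreal \<dots> = ennreal (1 / 2) * (?e x + ?e (- x))"
      using e_nonneg by (subst ennreal_mult) (simp_all add: ennreal_plus)
    finally show ?case .
  qed
  then have "(\<integral>\<^sup>+x. ennreal (exp (- \<bar>x\<bar> / b) / (2 * b)) \<partial>lborel)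
      = ennreal (1 / 2) * ((\<integral>\<^sup>+x. ?e x \<partial>lborel) + (\<integral>\<^sup>+x. ?e (- x) \<partial>lborel))"
    by (simp add: nn_integral_cong_AE nn_integral_cmult nn_integral_add e_nonneg)
  also have "\<dots> = ennreal (1 / 2) * ennreal 2"
    unfolding e_int e_reflected_int by simp
  also have "\<dots> = 1"
    by (subst ennreal_mult[symmetric]) simp_all
  finally show "emeasure (laplace b) (space (laplace b)) = 1"
    by (simp add: laplace_def emeasure_density)
qed

lemma nn_integral_laplace_shift_le:
  assumes "0 < b" "F \<in> borel_measurable borel"
  shows "(\<integral>\<^sup>+x. F (x + s) \<partial>laplace b) \<le> ennreal (exp (\<bar>s\<bar> / b)) * (\<integral>\<^sup>+x. F x \<partial>laplace b)"
  unfolding laplace_def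
proof (rule nn_integral_density_shift_le)
  fix y
  have "\<bar>y\<bar> - \<bar>y - s\<bar> \<le> \<bar>s\<bar>"
    by arith
  then have "- \<bar>y - s\<bar> / b \<le> \<bar>s\<bar> / b + - \<bar>y\<bar> / b"
    using divide_right_mono[of _ _ b] assms(1) by (fastforce simp: diff_divide_distrib)
  then have "exp (- \<bar>y - s\<bar> / b) / (2 * b) \<le> exp (\<bar>s\<bar> / b) * (exp (- \<bar>y\<bar> / b) / (2 * b))"
    using assms(1) by (simp add: exp_add[symmetric] divide_right_mono)
  then show "ennreal (exp (- \<bar>y - s\<bar> / b) / (2 * b))
      \<le> ennreal (exp (\<bar>s\<bar> / b)) * ennreal (exp (- \<bar>y\<bar> / b) / (2 * b))"
    using assms(1) by (simp add: ennreal_mult[symmetric] ennreal_leI)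
qed (use assms in simp_all)

lemma measurable_shift_noise:
  fixes M :: "real measure"
  assumes "sets M = sets borel"
  shows "shift_noise i s \<in> measurable (PiM UNIV (\<lambda>_. M)) (PiM UNIV (\<lambda>_. M))"
  unfolding shift_noise_def
proof (rule measurable_fun_upd[where J = UNIV])
  have "(\<lambda>x. x i) \<in> measurable (PiM UNIV (\<lambda>_. M)) M"
    by (rule measurable_component_singleton) simp
  then have [measurable]: "(\<lambda>x. x i) \<in> borel_measurable (PiM UNIV (\<lambda>_. M))"
    by (simp add: measurable_cong_sets[OF refl assms])
  have "(\<lambda>x. x i + s) \<in> borel_measurable (PiM UNIV (\<lambda>_. M))"
    by measurable
  then show "(\<lambda>x. x i + s) \<in> measurable (PiM UNIV (\<lambda>_. M)) M"
    by (simp add: measurable_cong_sets[OF refl assms])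
qed simp_all

lemma emeasure_PiM_shift_le:
  fixes M :: "real measure" and i :: 'i
  assumes M: "prob_space M" "sets M = sets borel"
    and shift_le: "\<And>F. F \<in> borel_measurable borel \<Longrightarrow> (\<integral>\<^sup>+x. F (x + s) \<partial>M) \<le> C * (\<integral>\<^sup>+x. F x \<partial>M)"
    and A: "A \<in> sets (PiM UNIV (\<lambda>_::'i. M))"
  shows "emeasure (PiM UNIV (\<lambda>_. M)) (shift_noise i s -` A) \<le> C * emeasure (PiM UNIV (\<lambda>_. M)) A"
proof -
  define Q where "Q = PiM UNIV (\<lambda>_::'i. M)"
  define P where "P = PiM (UNIV - {i}) (\<lambda>_::'i. M)"
  have A_Q [measurable]: "A \<in> sets Q"
    using A by (simp add: Q_def)
  interpret M: prob_space M by (rule M(1))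
  interpret P: prob_space P
    unfolding P_def by (rule prob_space_PiM) (rule M(1))
  interpret MP: pair_sigma_finite M P ..
  define g where "g = (\<lambda>z::real \<times> ('i \<Rightarrow> real). (snd z)(i := fst z))"
  have space_Q: "space Q = UNIV"
    using sets_eq_imp_space_eq[OF M(2)] by (simp add: Q_def space_PiM PiE_UNIV_domain)
  have g_measurable [measurable]: "g \<in> measurable (M \<Otimes>\<^sub>M P) Q"
    unfolding g_def Q_def P_def
    by (rule measurable_fun_upd[where J = "UNIV - {i}"]) (auto intro: measurable_fst measurable_snd)
  have "(\<lambda>(x, X). X(i := x)) = g"
    by (auto simp: g_def)
  then have "distr (M \<Otimes>\<^sub>M P) Q g = Q"
    using distr_pair_PiM_eq_PiM[of "UNIV - {i}" "\<lambda>_. M" i] M(1)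
    by (simp add: Q_def P_def insert_absorb)
  then have emeasure_Q: "emeasure Q B = (\<integral>\<^sup>+X. (\<integral>\<^sup>+x. indicator B (g (x, X)) \<partial>M) \<partial>P)"
    if B [measurable]: "B \<in> sets Q" for B
  proof -
    have "emeasure Q B = (\<integral>\<^sup>+y. indicator B y \<partial>distr (M \<Otimes>\<^sub>M P) Q g)"
      using \<open>distr _ _ _ = Q\<close> by simp
    also have "\<dots> = (\<integral>\<^sup>+z. indicator B (g z) \<partial>(M \<Otimes>\<^sub>M P))"
      by (rule nn_integral_distr) simp_all
    also have "\<dots> = (\<integral>\<^sup>+X. (\<integral>\<^sup>+x. indicator B (g (x, X)) \<partial>M) \<partial>P)"
      by (rule MP.nn_integral_snd[symmetric]) simp
    finally show ?thesis .
  qed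
  have [measurable]: "shift_noise i s -` A \<in> sets Q"
    using measurable_sets[OF measurable_shift_noise[OF M(2)] A] space_Q by (simp add: Q_def)
  have shift_g: "shift_noise i s (g (x, X)) = g (x + s, X)" for x X
    by (simp add: shift_noise_def g_def)
  have inner: "(\<integral>\<^sup>+x. indicator A (g (x + s, X)) \<partial>M) \<le> C * (\<integral>\<^sup>+x. indicator A (g (x, X)) \<partial>M)"
    if "X \<in> space P" for X
  proof (rule shift_le)
    have "(\<lambda>x. indicator A (g (x, X)) :: ennreal) \<in> borel_measurable M"
      using measurable_Pair1[OF g_measurable that] by measurable
    then show "(\<lambda>x. indicator A (g (x, X)) :: ennreal) \<in> borel_measurable borel"
      by (simp add: measurable_cong_sets[OF M(2) refl])
  qed
  have "emeasure Q (shift_noise i s -` A) = (\<integral>\<^sup>+X. (\<integral>\<^sup>+x. indicator A (g (x + s, X)) \<partial>M) \<partial>P)"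
    by (simp add: emeasure_Q indicator_vimage shift_g)
  also have "\<dots> \<le> (\<integral>\<^sup>+X. C * (\<integral>\<^sup>+x. indicator A (g (x, X)) \<partial>M) \<partial>P)"
    by (intro nn_integral_mono inner)
  also have "\<dots> = C * emeasure Q A"
    unfolding emeasure_Q[OF A_Q] by (intro nn_integral_cmult) measurable
  finally show ?thesis
    unfolding Q_def .
qed

lemma prob_space_noise_space: "prob_space noise_space"
  unfolding noise_space_def by (simp add: prob_space_PiM prob_space_laplace)

lemma space_noise_space [simp]: "space noise_space = UNIV"
  by (simp add: noise_space_def space_PiM PiE_UNIV_domain laplace_def)

lemma measure_noise_space_shift_le:
  "measure noise_space (shift_noise i s -` B) \<le> exp \<bar>s\<bar> * measure noise_space B"
proof (cases "B \<in> sets noise_space")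
  case True
  interpret prob_space noise_space
    by (rule prob_space_noise_space)
  have "emeasure noise_space (shift_noise i s -` B) \<le> ennreal (exp \<bar>s\<bar>) * emeasure noise_space B"
    using True unfolding noise_space_def
    by (intro emeasure_PiM_shift_le prob_space_laplace)
      (simp_all add: nn_integral_laplace_shift_le[of 1, simplified])
  then show ?thesis
    by (simp add: emeasure_eq_measure ennreal_mult[symmetric])
next
  case False
  have "shift_noise i s -` B \<notin> sets noise_space"
  proof
    assume "shift_noise i s -` B \<in> sets noise_space"
    then have "shift_noise i (- s) -` shift_noise i s -` B \<in> sets noise_space"
      using measurable_sets[OF measurable_shift_noise[of "laplace 1" i "- s", folded noise_space_def]]
      by simp
    with False show False
      by (simp add: vimage_def)
  qed
  then show ?thesis
    using False by (simp add: measure_notin_sets)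
qed

lemma adap_pi_eq_measure_stops_with:
  "adap_pi K \<beta> \<delta> eps c d (length as) as ahat = measure noise_space {\<omega>. stops_with K \<beta> \<delta> eps c d as ahat \<omega>}"
  unfolding adap_pi_def stops_with_def Let_def
  by (rule arg_cong[where f = "measure noise_space"]) (auto dest: arg_cong[where f = length])

lemma adap_pi_le_exp_reward_diff:
  assumes "eps \<noteq> 0" "1 \<le> t0" "\<forall>t\<in>{1..length as} - {t0}. d' t (as ! (t - 1)) = d t (as ! (t - 1))"
  shows "adap_pi K \<beta> \<delta> eps c d (length as) as ahat \<le>
    exp \<bar>eps * (d t0 (as ! (t0 - 1)) - d' t0 (as ! (t0 - 1)))\<bar> * adap_pi K \<beta> \<delta> eps c d' (length as) as ahat"
proof -
  have "{\<omega>. stops_with K \<beta> \<delta> eps c d as ahat \<omega>} =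
      coupled_noise K as t0 eps d d' -` {\<omega>. stops_with K \<beta> \<delta> eps c d' as ahat \<omega>}"
    using stops_with_coupled_iff[where d = d and d' = d', OF assms] by auto
  then show ?thesis
    unfolding adap_pi_eq_measure_stops_with coupled_noise_def
    by (simp only: measure_noise_space_shift_le)
qed

theorem theorem3:
  fixes K :: nat and \<epsilon> \<beta> \<delta> :: real
    and c :: "real \<Rightarrow> nat \<Rightarrow> nat \<Rightarrow> nat \<Rightarrow> nat \<Rightarrow> real \<Rightarrow> real"
    and T :: nat and d d' :: "nat \<Rightarrow> nat \<Rightarrow> real"
    and as :: "nat list" and ahat :: nat
  assumes "\<epsilon> > 0" and "0 < \<beta>" and "\<beta> < 1" and "0 < \<delta>" and "\<delta> < 1"
    and "\<forall>k1 k2 n1 n2 x. 0 < x \<and> x < 1 \<longrightarrow> c \<epsilon> k1 k2 n1 n2 x \<ge> 0"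
    and "\<forall>t\<in>{1..T}. \<forall>a<K. d t a \<in> {0..1}"
    and "\<forall>t\<in>{1..T}. \<forall>a<K. d' t a \<in> {0..1}"
    and "\<exists>t0\<in>{1..T}. (\<exists>a<K. d t0 a \<noteq> d' t0 a) \<and>
           (\<forall>t\<in>{1..T}. t \<noteq> t0 \<longrightarrow> (\<forall>a<K. d t a = d' t a))"
    and "length as = T" and "set as \<subseteq> {..<K}" and "ahat < K"
  shows "adap_pi K \<beta> \<delta> \<epsilon> c d T as ahat \<le> exp \<epsilon> * adap_pi K \<beta> \<delta> \<epsilon> c d' T as ahat"
proof -
  obtain t0 where t0: "t0 \<in> {1..T}" and rows: "\<forall>t\<in>{1..T}. t \<noteq> t0 \<longrightarrow> (\<forall>a<K. d t a = d' t a)"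
    using assms(9) by blast
  have arm_less: "as ! (t - 1) < K" if "t \<in> {1..T}" for t
    using that assms(10,11) nth_mem[of "t - 1" as] by (auto simp: subset_iff)
  have "\<forall>t\<in>{1..length as} - {t0}. d' t (as ! (t - 1)) = d t (as ! (t - 1))"
    using rows arm_less assms(10) by auto
  then have "adap_pi K \<beta> \<delta> \<epsilon> c d T as ahat \<le>
      exp \<bar>\<epsilon> * (d t0 (as ! (t0 - 1)) - d' t0 (as ! (t0 - 1)))\<bar> * adap_pi K \<beta> \<delta> \<epsilon> c d' T as ahat"
    using adap_pi_le_exp_reward_diff[of \<epsilon> t0 as d' d] assms(1,10) t0 by simp
  also have "\<dots> \<le> exp \<epsilon> * adap_pi K \<beta> \<delta> \<epsilon> c d' T as ahat"
  proof (intro mult_right_mono)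
    have "d t0 (as ! (t0 - 1)) \<in> {0..1}" "d' t0 (as ! (t0 - 1)) \<in> {0..1}"
      using assms(7,8) t0 arm_less[OF t0] by auto
    then show "exp \<bar>\<epsilon> * (d t0 (as ! (t0 - 1)) - d' t0 (as ! (t0 - 1)))\<bar> \<le> exp \<epsilon>"
      using assms(1) by (auto simp: abs_mult mult_left_le)
  qed (simp add: adap_pi_def)
  finally show ?thesis .
qed

end
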